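(* Let $G$ be a group, $N$ a normal subgroup, and $S=\bigoplus_{g\in G}S_g$ a nearly epsilon-strongly $G$-graded ring. Fix $C\in G/N$. For any positive integer $n$ and elements $s_{g_1},\dots,s_{g_n}$ with $s_{g_i}\in S_{g_i}$ and $g_i\in C$ for all $i$, there exists $e\in S_CS_{C^{-1}}$ with $es_{g_i}=s_{g_i}$ for all $1\le i\le n$, and there exists $e'\in S_{C^{-1}}S_C$ with $s_{g_i}e'=s_{g_i}$ for all $1\le i\le n$.
   Context: Rings are associative, not necessarily unital; $AB$ denotes finite sums of products. A $G$-grading: $S=\bigoplus_gS_g$, $S_gS_h\subseteq S_{gh}$. The grading is nearly epsilon-strong if $S_gS_{g^{-1}}S_g=S_g$ for all $g$ and each ring $S_gS_{g^{-1}}$ is $s$-unital ($x\in xR\cap Rx$ for all $x$ in the ring $R$); equivalently, for each $g$ and $s\in S_g$ there are $\epsilon\in S_gS_{g^{-1}}$ and $\epsilon'\in S_{g^{-1}}S_g$ with $\epsilon s=s=s\epsilon'$. Induced grading: $S_C=\bigoplus_{g\in C}S_g$. *)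

theory Defs
  imports "HOL-Algebra.Coset"
begin

text \<open>Rings are elements of the (associative, not necessarily unital) type class ring.
  The product AB of additive subsets is the set of finite sums of products.\<close>

definition setmul :: "'a::ring set \<Rightarrow> 'a set \<Rightarrow> 'a set" where
  "setmul A B = {x. \<exists>(n::nat) a b. (\<forall>i<n. a i \<in> A \<and> b i \<in> B) \<and> x = (\<Sum>i<n. a i * b i)}"

definition additive_subgroup :: "'a::ring set \<Rightarrow> bool" where
  "additive_subgroup A \<longleftrightarrow> 0 \<in> A \<and> (\<forall>x\<in>A. \<forall>y\<in>A. x + y \<in> A \<and> - x \<in> A)"

definition graded_ring :: "('g, 'b) monoid_scheme \<Rightarrow> ('g \<Rightarrow> 'a::ring set) \<Rightarrow> bool" where
  "graded_ring G S \<longleftrightarrow> group G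
    \<and> (\<forall>g\<in>carrier G. additive_subgroup (S g))
    \<and> (\<forall>g\<in>carrier G. \<forall>h\<in>carrier G. \<forall>x\<in>S g. \<forall>y\<in>S h. x * y \<in> S (g \<otimes>\<^bsub>G\<^esub> h))
    \<and> (\<forall>x. \<exists>f F. finite F \<and> F \<subseteq> carrier G \<and> (\<forall>g\<in>F. f g \<in> S g) \<and> x = sum f F)
    \<and> (\<forall>f F. finite F \<and> F \<subseteq> carrier G \<and> (\<forall>g\<in>F. f g \<in> S g) \<and> sum f F = 0
           \<longrightarrow> (\<forall>g\<in>F. f g = 0))"

definition s_unital :: "'a::ring set \<Rightarrow> bool" where
  "s_unital R \<longleftrightarrow> (\<forall>x\<in>R. (\<exists>r\<in>R. x = x * r) \<and> (\<exists>r\<in>R. x = r * x))"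

definition nearly_epsilon_strong :: "('g, 'b) monoid_scheme \<Rightarrow> ('g \<Rightarrow> 'a::ring set) \<Rightarrow> bool" where
  "nearly_epsilon_strong G S \<longleftrightarrow> graded_ring G S
    \<and> (\<forall>g\<in>carrier G. setmul (setmul (S g) (S (inv\<^bsub>G\<^esub> g))) (S g) = S g
        \<and> s_unital (setmul (S g) (S (inv\<^bsub>G\<^esub> g))))"

definition induced_comp :: "('g \<Rightarrow> 'a::ring set) \<Rightarrow> 'g set \<Rightarrow> 'a set" where
  "induced_comp S C = {x. \<exists>f F. finite F \<and> F \<subseteq> C \<and> (\<forall>g\<in>F. f g \<in> S g) \<and> x = sum f F}"

end

theory Submission
  imports Defs
begin

(* Every homogeneous s in S_g has a left unit in S_g S_{g^-1}: as S_g = S_g S_{g^-1} S_g, s is a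
   finite sum of products r b with r in the s-unital ring S_g S_{g^-1}, and a common local unit of
   these r fixes s. Such units have degree 1 and, for g in C, lie in S_C S_{C^-1}. Finitely many
   local units are merged one at a time by the circle operation v + w - w v; the degree-1 part of
   S_C S_{C^-1} is closed under it, and subtracting the action of a degree-1 unit keeps elements
   homogeneous, so the whole family has a common unit. *)

lemma additive_subgroup_zero: "additive_subgroup H \<Longrightarrow> 0 \<in> H"
  unfolding additive_subgroup_def by blast

lemma additive_subgroup_add: "additive_subgroup H \<Longrightarrow> x \<in> H \<Longrightarrow> y \<in> H \<Longrightarrow> x + y \<in> H"
  unfolding additive_subgroup_def by blast

lemma additive_subgroup_uminus: "additive_subgroup H \<Longrightarrow> x \<in> H \<Longrightarrow> - x \<in> H"
  unfolding additive_subgroup_def by blast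

lemma additive_subgroup_diff: "additive_subgroup H \<Longrightarrow> x \<in> H \<Longrightarrow> y \<in> H \<Longrightarrow> x - y \<in> H"
  unfolding additive_subgroup_def by (metis diff_conv_add_uminus)

lemma zero_mem_setmul [simp]: "0 \<in> setmul A B"
  unfolding setmul_def by (intro CollectI exI[of _ 0]) simp

lemma mult_add_mem_setmul:
  assumes "a \<in> A" "b \<in> B" "x \<in> setmul A B"
  shows "a * b + x \<in> setmul A B"
proof -
  obtain n :: nat and as bs where ab: "\<forall>i<n. as i \<in> A \<and> bs i \<in> B" "x = (\<Sum>i<n. as i * bs i)"
    using assms(3) unfolding setmul_def by blast
  have "a * b + x = (\<Sum>i<Suc n. (as(n := a)) i * (bs(n := b)) i)"
    unfolding ab(2) by (simp add: add.commute)
  moreover have "\<forall>i<Suc n. (as(n := a)) i \<in> A \<and> (bs(n := b)) i \<in> B"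
    using ab(1) assms(1,2) by (simp add: less_Suc_eq)
  ultimately show ?thesis unfolding setmul_def by blast
qed

lemma setmul_induct [consumes 1, case_names zero step]:
  assumes "x \<in> setmul A B" "P 0"
    and "\<And>a b y. a \<in> A \<Longrightarrow> b \<in> B \<Longrightarrow> P y \<Longrightarrow> P (a * b + y)"
  shows "P x"
proof -
  obtain n :: nat and a b where ab: "\<forall>i<n. a i \<in> A \<and> b i \<in> B" "x = (\<Sum>i<n. a i * b i)"
    using assms(1) unfolding setmul_def by blast
  have "P (\<Sum>i<m. a i * b i)" if "m \<le> n" for m
    using that
  proof (induction m)
    case (Suc m)
    then have "P (a m * b m + (\<Sum>i<m. a i * b i))" using ab(1) assms(3) by simp
    then show ?case by (simp add: add.commute)
  qed (simp add: assms(2))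
  with ab(2) show ?thesis by blast
qed

lemma mult_mem_setmul: "a \<in> A \<Longrightarrow> b \<in> B \<Longrightarrow> a * b \<in> setmul A B"
  using mult_add_mem_setmul[OF _ _ zero_mem_setmul] by fastforce

lemma add_mem_setmul: "x \<in> setmul A B \<Longrightarrow> y \<in> setmul A B \<Longrightarrow> x + y \<in> setmul A B"
  by (induction x rule: setmul_induct) (simp_all add: add.assoc mult_add_mem_setmul)

lemma uminus_mem_setmul:
  assumes "\<And>a. a \<in> A \<Longrightarrow> - a \<in> A" and "x \<in> setmul A B"
  shows "- x \<in> setmul A B"
  using assms(2)
proof (induction x rule: setmul_induct)
  case (step a b y)
  then show ?case using mult_add_mem_setmul[of "- a" A b B "- y"] assms(1) by simp
qed simp

lemma diff_mem_setmul:
  assumes "\<And>a. a \<in> A \<Longrightarrow> - a \<in> A" and "x \<in> setmul A B" "y \<in> setmul A B"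
  shows "x - y \<in> setmul A B"
  using add_mem_setmul[OF assms(2) uminus_mem_setmul[OF assms(1,3)]] by simp

lemma additive_subgroup_setmul: "additive_subgroup A \<Longrightarrow> additive_subgroup (setmul A B)"
  unfolding additive_subgroup_def[of "setmul A B"]
  by (auto intro: add_mem_setmul uminus_mem_setmul additive_subgroup_uminus)

lemma setmul_mult_right:
  assumes "x \<in> setmul A B" and "\<And>b. b \<in> B \<Longrightarrow> b * c \<in> B'"
  shows "x * c \<in> setmul A B'"
  using assms(1)
proof (induction x rule: setmul_induct)
  case (step a b y)
  then show ?case
    using mult_add_mem_setmul[of a A "b * c" B' "y * c"] assms(2) by (simp add: algebra_simps)
qed simp

lemma setmul_mult_left:
  assumes "x \<in> setmul A B" and "\<And>a. a \<in> A \<Longrightarrow> c * a \<in> A'"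
  shows "c * x \<in> setmul A' B"
  using assms(1)
proof (induction x rule: setmul_induct)
  case (step a b y)
  then show ?case
    using mult_add_mem_setmul[of "c * a" A' b B "c * y"] assms(2) by (simp add: algebra_simps)
qed simp

lemma setmul_mono:
  assumes "A \<subseteq> A'" "B \<subseteq> B'"
  shows "setmul A B \<subseteq> setmul A' B'"
proof
  fix x assume "x \<in> setmul A B"
  then show "x \<in> setmul A' B'"
    by (induction x rule: setmul_induct) (use assms in \<open>auto intro: mult_add_mem_setmul\<close>)
qed

lemma setmul_assoc_subset: "setmul (setmul A B) C \<subseteq> setmul A (setmul B C)"
proof
  fix x assume "x \<in> setmul (setmul A B) C"
  then show "x \<in> setmul A (setmul B C)"
  proof (induction x rule: setmul_induct)
    case (step r c y)
    have "r * c \<in> setmul A (setmul B C)"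
      using setmul_mult_right[OF step(1)] step(2) mult_mem_setmul by blast
    then show ?case using add_mem_setmul step(3) by blast
  qed simp
qed

lemma setmul_subset_additive_subgroup:
  assumes "additive_subgroup H" and "\<And>a b. a \<in> A \<Longrightarrow> b \<in> B \<Longrightarrow> a * b \<in> H"
  shows "setmul A B \<subseteq> H"
proof
  fix x assume "x \<in> setmul A B"
  then show "x \<in> H"
    by (induction x rule: setmul_induct)
      (auto intro: assms additive_subgroup_zero additive_subgroup_add)
qed

lemma common_left_unit:
  fixes x :: "'i \<Rightarrow> 'a::ring" and R T :: "'a set"
  assumes "finite I" "\<forall>i\<in>I. x i \<in> T"
    and unit: "\<And>y. y \<in> T \<Longrightarrow> \<exists>v\<in>R. v * y = y"
    and diff: "\<And>v y. v \<in> R \<Longrightarrow> y \<in> T \<Longrightarrow> y - v * y \<in> T"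
    and circ: "\<And>v w. v \<in> R \<Longrightarrow> w \<in> R \<Longrightarrow> v + w - w * v \<in> R"
    and "0 \<in> R"
  shows "\<exists>u\<in>R. \<forall>i\<in>I. u * x i = x i"
  using assms(1,2)
proof (induction I arbitrary: x rule: finite_induct)
  case empty
  then show ?case using \<open>0 \<in> R\<close> by blast
next
  case (insert j I)
  obtain v where v: "v \<in> R" "v * x j = x j"
    using insert.prems unit by blast
  obtain w where w: "w \<in> R" "\<forall>i\<in>I. w * (x i - v * x i) = x i - v * x i"
    using insert.IH[of "\<lambda>i. x i - v * x i"] insert.prems diff v(1) by blast
  \<comment> \<open>v fixes x j and w fixes what v leaves of the others, so v + w - w v fixes all of them.\<close>
  have "(v + w - w * v) * x i = x i" if "i \<in> insert j I" for i
    using that v(2) w(2) by (auto simp: algebra_simps mult.assoc)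
  then show ?case using circ[OF v(1) w(1)] by blast
qed

lemma common_right_unit:
  fixes x :: "'i \<Rightarrow> 'a::ring" and R T :: "'a set"
  assumes "finite I" "\<forall>i\<in>I. x i \<in> T"
    and unit: "\<And>y. y \<in> T \<Longrightarrow> \<exists>v\<in>R. y * v = y"
    and diff: "\<And>v y. v \<in> R \<Longrightarrow> y \<in> T \<Longrightarrow> y - y * v \<in> T"
    and circ: "\<And>v w. v \<in> R \<Longrightarrow> w \<in> R \<Longrightarrow> v + w - v * w \<in> R"
    and "0 \<in> R"
  shows "\<exists>u\<in>R. \<forall>i\<in>I. x i * u = x i"
  using assms(1,2)
proof (induction I arbitrary: x rule: finite_induct)
  case empty
  then show ?case using \<open>0 \<in> R\<close> by blast
next
  case (insert j I)
  obtain v where v: "v \<in> R" "x j * v = x j"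
    using insert.prems unit by blast
  obtain w where w: "w \<in> R" "\<forall>i\<in>I. (x i - x i * v) * w = x i - x i * v"
    using insert.IH[of "\<lambda>i. x i - x i * v"] insert.prems diff v(1) by blast
  have "x i * (v + w - v * w) = x i" if "i \<in> insert j I" for i
  proof (cases "i = j")
    case True
    then show ?thesis using v(2) by (simp add: algebra_simps flip: mult.assoc)
  next
    case False
    then have "(x i - x i * v) * w = x i - x i * v" using that w(2) by simp
    then show ?thesis by (simp add: algebra_simps mult.assoc)
  qed
  then show ?case using circ[OF v(1) w(1)] by blast
qed

lemma s_unital_common_left_unit:
  assumes "additive_subgroup R" "\<And>v w. v \<in> R \<Longrightarrow> w \<in> R \<Longrightarrow> v * w \<in> R"
    and "s_unital R" "finite I" "\<forall>i\<in>I. x i \<in> R"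
  shows "\<exists>u\<in>R. \<forall>i\<in>I. u * x i = x i"
proof (rule common_left_unit[where T = R])
  show "\<exists>v\<in>R. v * y = y" if "y \<in> R" for y
    using \<open>s_unital R\<close> that unfolding s_unital_def by metis
qed (use assms in \<open>auto intro: additive_subgroup_zero additive_subgroup_diff additive_subgroup_add\<close>)

lemma s_unital_common_right_unit:
  assumes "additive_subgroup R" "\<And>v w. v \<in> R \<Longrightarrow> w \<in> R \<Longrightarrow> v * w \<in> R"
    and "s_unital R" "finite I" "\<forall>i\<in>I. x i \<in> R"
  shows "\<exists>u\<in>R. \<forall>i\<in>I. x i * u = x i"
proof (rule common_right_unit[where T = R])
  show "\<exists>v\<in>R. y * v = y" if "y \<in> R" for y
    using \<open>s_unital R\<close> that unfolding s_unital_def by metis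
qed (use assms in \<open>auto intro: additive_subgroup_zero additive_subgroup_diff additive_subgroup_add\<close>)

lemma s_unital_setmul_left_unit:
  assumes "additive_subgroup R" "\<And>v w. v \<in> R \<Longrightarrow> w \<in> R \<Longrightarrow> v * w \<in> R" "s_unital R"
    and "x \<in> setmul R M"
  shows "\<exists>u\<in>R. u * x = x"
proof -
  obtain n :: nat and a b where ab: "\<forall>i<n. a i \<in> R \<and> b i \<in> M" "x = (\<Sum>i<n. a i * b i)"
    using assms(4) unfolding setmul_def by blast
  obtain u where "u \<in> R" "\<forall>i<n. u * a i = a i"
    using s_unital_common_left_unit[OF assms(1-3), of "{..<n}" a] ab(1) by auto
  moreover from this(2) have "u * x = x"
    unfolding ab(2) sum_distrib_left by (simp flip: mult.assoc)
  ultimately show ?thesis by blast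
qed

lemma s_unital_setmul_right_unit:
  assumes "additive_subgroup R" "\<And>v w. v \<in> R \<Longrightarrow> w \<in> R \<Longrightarrow> v * w \<in> R" "s_unital R"
    and "x \<in> setmul M R"
  shows "\<exists>u\<in>R. x * u = x"
proof -
  obtain n :: nat and a b where ab: "\<forall>i<n. a i \<in> M \<and> b i \<in> R" "x = (\<Sum>i<n. a i * b i)"
    using assms(4) unfolding setmul_def by blast
  obtain u where "u \<in> R" "\<forall>i<n. b i * u = b i"
    using s_unital_common_right_unit[OF assms(1-3), of "{..<n}" b] ab(1) by auto
  moreover from this(2) have "x * u = x"
    unfolding ab(2) sum_distrib_right by (simp add: mult.assoc)
  ultimately show ?thesis by blast
qed

lemma induced_comp_homogeneous: "g \<in> D \<Longrightarrow> x \<in> S g \<Longrightarrow> x \<in> induced_comp S D"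
  unfolding induced_comp_def by (intro CollectI exI[of _ "\<lambda>_. x"] exI[of _ "{g}"]) simp

lemma induced_comp_additive_map:
  assumes "\<phi> 0 = 0" "\<And>x y. \<phi> (x + y) = \<phi> x + \<phi> y"
    and "\<And>g y. g \<in> D \<Longrightarrow> y \<in> S g \<Longrightarrow> \<phi> y \<in> S g"
    and "x \<in> induced_comp S D"
  shows "\<phi> x \<in> induced_comp S D"
proof -
  obtain f F where fF: "finite F" "F \<subseteq> D" "\<forall>g\<in>F. f g \<in> S g" "x = sum f F"
    using assms(4) unfolding induced_comp_def by blast
  have "\<phi> x = sum (\<phi> \<circ> f) F"
    unfolding fF(4) using sum_comp_morphism[of \<phi>] assms(1,2) by metis
  moreover have "\<forall>g\<in>F. (\<phi> \<circ> f) g \<in> S g" using fF(2,3) assms(3) by auto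
  ultimately show ?thesis unfolding induced_comp_def using fF(1,2) by blast
qed

locale grading =
  fixes G (structure) and S :: "'g \<Rightarrow> 'a::ring set"
  assumes graded: "graded_ring G S"
begin

sublocale group G
  using graded by (simp add: graded_ring_def)

lemma additive_subgroup_component: "g \<in> carrier G \<Longrightarrow> additive_subgroup (S g)"
  using graded by (simp add: graded_ring_def)

lemma component_mult:
  "g \<in> carrier G \<Longrightarrow> h \<in> carrier G \<Longrightarrow> x \<in> S g \<Longrightarrow> y \<in> S h \<Longrightarrow> x * y \<in> S (g \<otimes> h)"
  using graded by (simp add: graded_ring_def)

lemma component_mult_one_left: "g \<in> carrier G \<Longrightarrow> v \<in> S \<one> \<Longrightarrow> x \<in> S g \<Longrightarrow> v * x \<in> S g"
  using component_mult[of \<one> g v x] by simp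

lemma component_mult_one_right: "g \<in> carrier G \<Longrightarrow> x \<in> S g \<Longrightarrow> v \<in> S \<one> \<Longrightarrow> x * v \<in> S g"
  using component_mult[of g \<one> x v] by simp

lemma setmul_components_subset:
  "g \<in> carrier G \<Longrightarrow> h \<in> carrier G \<Longrightarrow> setmul (S g) (S h) \<subseteq> S (g \<otimes> h)"
  by (rule setmul_subset_additive_subgroup) (simp_all add: additive_subgroup_component component_mult)

lemma setmul_inverse_components_subset:
  "g \<in> carrier G \<Longrightarrow> h \<in> carrier G \<Longrightarrow> g \<otimes> h = \<one> \<Longrightarrow> setmul (S g) (S h) \<subseteq> S \<one>"
  using setmul_components_subset[of g h] by simp

lemma setmul_inverse_components_mult_closed:
  assumes "g \<in> carrier G" "h \<in> carrier G" "g \<otimes> h = \<one>"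
    and "v \<in> setmul (S g) (S h)" "w \<in> setmul (S g) (S h)"
  shows "v * w \<in> setmul (S g) (S h)"
proof (rule setmul_mult_right[OF assms(4)])
  have "w \<in> S \<one>" using setmul_inverse_components_subset[OF assms(1-3)] assms(5) by blast
  then show "b * w \<in> S h" if "b \<in> S h" for b
    using component_mult_one_right[OF assms(2) that] by blast
qed

lemma set_inv_subset_carrier: "D \<subseteq> carrier G \<Longrightarrow> set_inv D \<subseteq> carrier G"
  by (auto simp: SET_INV_def)

lemma induced_comp_uminus:
  assumes "D \<subseteq> carrier G" "x \<in> induced_comp S D"
  shows "- x \<in> induced_comp S D"
proof (rule induced_comp_additive_map[where \<phi> = uminus, OF _ _ _ assms(2)])
  fix g y assume "g \<in> D" "y \<in> S g"
  with assms(1) show "- y \<in> S g"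
    using additive_subgroup_uminus additive_subgroup_component by blast
qed simp_all

lemma induced_comp_mult_one_left:
  "D \<subseteq> carrier G \<Longrightarrow> v \<in> S \<one> \<Longrightarrow> x \<in> induced_comp S D \<Longrightarrow> v * x \<in> induced_comp S D"
  by (rule induced_comp_additive_map[where \<phi> = "\<lambda>x. v * x"])
    (auto simp: distrib_left intro: component_mult_one_left)

lemma induced_comp_mult_one_right:
  "D \<subseteq> carrier G \<Longrightarrow> v \<in> S \<one> \<Longrightarrow> x \<in> induced_comp S D \<Longrightarrow> x * v \<in> induced_comp S D"
  by (rule induced_comp_additive_map[where \<phi> = "\<lambda>x. x * v"])
    (auto simp: distrib_right intro: component_mult_one_right)

end

locale nearly_epsilon_strong_grading = grading +
  assumes nearly_epsilon_strong: "nearly_epsilon_strong G S"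
begin

lemma s_unital_component_product: "g \<in> carrier G \<Longrightarrow> s_unital (setmul (S g) (S (inv g)))"
  using nearly_epsilon_strong by (simp add: nearly_epsilon_strong_def)

lemma component_product_absorbs: "g \<in> carrier G \<Longrightarrow> setmul (setmul (S g) (S (inv g))) (S g) = S g"
  using nearly_epsilon_strong by (simp add: nearly_epsilon_strong_def)

lemma component_left_unit:
  assumes "g \<in> carrier G" "x \<in> S g"
  shows "\<exists>v\<in>setmul (S g) (S (inv g)). v * x = x"
proof (rule s_unital_setmul_left_unit)
  show "additive_subgroup (setmul (S g) (S (inv g)))"
    by (intro additive_subgroup_setmul additive_subgroup_component assms(1))
  show "v * w \<in> setmul (S g) (S (inv g))"
    if "v \<in> setmul (S g) (S (inv g))" "w \<in> setmul (S g) (S (inv g))" for v w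
    using setmul_inverse_components_mult_closed[OF assms(1) _ _ that] assms(1) by simp
  show "s_unital (setmul (S g) (S (inv g)))"
    using s_unital_component_product[OF assms(1)] .
  show "x \<in> setmul (setmul (S g) (S (inv g))) (S g)"
    using component_product_absorbs[OF assms(1)] assms(2) by simp
qed

lemma component_right_unit:
  assumes "g \<in> carrier G" "x \<in> S g"
  shows "\<exists>v\<in>setmul (S (inv g)) (S g). x * v = x"
proof (rule s_unital_setmul_right_unit)
  show "additive_subgroup (setmul (S (inv g)) (S g))"
    by (intro additive_subgroup_setmul additive_subgroup_component inv_closed assms(1))
  show "v * w \<in> setmul (S (inv g)) (S g)"
    if "v \<in> setmul (S (inv g)) (S g)" "w \<in> setmul (S (inv g)) (S g)" for v w
    using setmul_inverse_components_mult_closed[OF _ assms(1) _ that] assms(1) by simp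
  show "s_unital (setmul (S (inv g)) (S g))"
    using s_unital_component_product[of "inv g"] assms(1) by simp
  show "x \<in> setmul (S g) (setmul (S (inv g)) (S g))"
    using setmul_assoc_subset component_product_absorbs[OF assms(1)] assms(2) by blast
qed

lemma homogeneous_left_unit_in_induced_product:
  assumes "D \<subseteq> carrier G" "h \<in> D" "y \<in> S h"
  shows "\<exists>v\<in>setmul (induced_comp S D) (induced_comp S (set_inv D)) \<inter> S \<one>. v * y = y"
proof -
  have h: "h \<in> carrier G" using assms(1,2) by blast
  obtain v where v: "v \<in> setmul (S h) (S (inv h))" "v * y = y"
    using component_left_unit[OF h assms(3)] by blast
  have "setmul (S h) (S (inv h)) \<subseteq> setmul (induced_comp S D) (induced_comp S (set_inv D))"
    using assms(2) by (intro setmul_mono) (auto intro: induced_comp_homogeneous simp: SET_INV_def)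
  moreover have "setmul (S h) (S (inv h)) \<subseteq> S \<one>"
    using setmul_inverse_components_subset h by simp
  ultimately show ?thesis using v by blast
qed

lemma homogeneous_right_unit_in_induced_product:
  assumes "D \<subseteq> carrier G" "h \<in> D" "y \<in> S h"
  shows "\<exists>v\<in>setmul (induced_comp S (set_inv D)) (induced_comp S D) \<inter> S \<one>. y * v = y"
proof -
  have h: "h \<in> carrier G" using assms(1,2) by blast
  obtain v where v: "v \<in> setmul (S (inv h)) (S h)" "y * v = y"
    using component_right_unit[OF h assms(3)] by blast
  have "setmul (S (inv h)) (S h) \<subseteq> setmul (induced_comp S (set_inv D)) (induced_comp S D)"
    using assms(2) by (intro setmul_mono) (auto intro: induced_comp_homogeneous simp: SET_INV_def)
  moreover have "setmul (S (inv h)) (S h) \<subseteq> S \<one>"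
    using setmul_inverse_components_subset h by simp
  ultimately show ?thesis using v by blast
qed

lemma induced_comp_common_left_unit:
  assumes "D \<subseteq> carrier G" "finite I" "\<forall>i\<in>I. deg i \<in> D \<and> x i \<in> S (deg i)"
  shows "\<exists>e\<in>setmul (induced_comp S D) (induced_comp S (set_inv D)). \<forall>i\<in>I. e * x i = x i"
proof -
  let ?P = "setmul (induced_comp S D) (induced_comp S (set_inv D))"
  have \<one>: "additive_subgroup (S \<one>)" using additive_subgroup_component by simp
  \<comment> \<open>Units of degree \<one> keep the remainders y - v y homogeneous.\<close>
  have "\<exists>e\<in>?P \<inter> S \<one>. \<forall>i\<in>I. e * x i = x i"
  proof (rule common_left_unit[where T = "\<Union>h\<in>D. S h"])
    show "\<exists>v\<in>?P \<inter> S \<one>. v * y = y" if "y \<in> (\<Union>h\<in>D. S h)" for y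
      using that homogeneous_left_unit_in_induced_product[OF assms(1)] by blast
    show "y - v * y \<in> (\<Union>h\<in>D. S h)" if v: "v \<in> ?P \<inter> S \<one>" and "y \<in> (\<Union>h\<in>D. S h)" for v y
    proof -
      obtain h where h: "h \<in> D" "y \<in> S h" using \<open>y \<in> (\<Union>h\<in>D. S h)\<close> by blast
      then have "h \<in> carrier G" using assms(1) by blast
      then have "y - v * y \<in> S h"
        using additive_subgroup_diff[OF additive_subgroup_component] component_mult_one_left h(2) v
        by blast
      then show ?thesis using h(1) by blast
    qed
    show "v + w - w * v \<in> ?P \<inter> S \<one>" if v: "v \<in> ?P \<inter> S \<one>" and w: "w \<in> ?P \<inter> S \<one>" for v w
    proof -
      have "w * v \<in> ?P"
        using w v induced_comp_mult_one_right[OF set_inv_subset_carrier[OF assms(1)]]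
        by (intro setmul_mult_right[of w]) auto
      then have "v + w - w * v \<in> ?P"
        using diff_mem_setmul[OF induced_comp_uminus[OF assms(1)] add_mem_setmul] v w by simp
      moreover have "v + w - w * v \<in> S \<one>"
        using component_mult_one_left[of \<one> w v] additive_subgroup_diff[OF \<one> additive_subgroup_add[OF \<one>]] v w
        by simp
      ultimately show ?thesis by blast
    qed
  qed (use assms(2,3) \<one> additive_subgroup_zero in auto)
  then show ?thesis by blast
qed

lemma induced_comp_common_right_unit:
  assumes "D \<subseteq> carrier G" "finite I" "\<forall>i\<in>I. deg i \<in> D \<and> x i \<in> S (deg i)"
  shows "\<exists>e\<in>setmul (induced_comp S (set_inv D)) (induced_comp S D). \<forall>i\<in>I. x i * e = x i"
proof -
  let ?P = "setmul (induced_comp S (set_inv D)) (induced_comp S D)"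
  have \<one>: "additive_subgroup (S \<one>)" using additive_subgroup_component by simp
  have "\<exists>e\<in>?P \<inter> S \<one>. \<forall>i\<in>I. x i * e = x i"
  proof (rule common_right_unit[where T = "\<Union>h\<in>D. S h"])
    show "\<exists>v\<in>?P \<inter> S \<one>. y * v = y" if "y \<in> (\<Union>h\<in>D. S h)" for y
      using that homogeneous_right_unit_in_induced_product[OF assms(1)] by blast
    show "y - y * v \<in> (\<Union>h\<in>D. S h)" if v: "v \<in> ?P \<inter> S \<one>" and "y \<in> (\<Union>h\<in>D. S h)" for v y
    proof -
      obtain h where h: "h \<in> D" "y \<in> S h" using \<open>y \<in> (\<Union>h\<in>D. S h)\<close> by blast
      then have "h \<in> carrier G" using assms(1) by blast
      then have "y - y * v \<in> S h"
        using additive_subgroup_diff[OF additive_subgroup_component] component_mult_one_right h(2) v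
        by blast
      then show ?thesis using h(1) by blast
    qed
    show "v + w - v * w \<in> ?P \<inter> S \<one>" if v: "v \<in> ?P \<inter> S \<one>" and w: "w \<in> ?P \<inter> S \<one>" for v w
    proof -
      have "v * w \<in> ?P"
        using w v induced_comp_mult_one_left[OF set_inv_subset_carrier[OF assms(1)]]
        by (intro setmul_mult_left[of w]) auto
      then have "v + w - v * w \<in> ?P"
        using diff_mem_setmul[OF induced_comp_uminus[OF set_inv_subset_carrier[OF assms(1)]]
            add_mem_setmul] v w
        by simp
      moreover have "v + w - v * w \<in> S \<one>"
        using component_mult_one_left[of \<one> v w] additive_subgroup_diff[OF \<one> additive_subgroup_add[OF \<one>]] v w
        by simp
      ultimately show ?thesis by blast
    qed
  qed (use assms(2,3) \<one> additive_subgroup_zero in auto)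
  then show ?thesis by blast
qed

end

theorem lemma5p7:
  fixes G (structure) and N :: "'g set" and S :: "'g \<Rightarrow> 'a::ring set"
    and C :: "'g set" and n :: nat and g :: "nat \<Rightarrow> 'g" and s :: "nat \<Rightarrow> 'a"
  assumes "group G"
    and "N \<lhd> G"
    and "nearly_epsilon_strong G S"
    and "C \<in> rcosets N"
    and "n \<ge> 1"
    and "\<forall>i\<in>{1..n}. g i \<in> C \<and> s i \<in> S (g i)"
  shows "(\<exists>e\<in>setmul (induced_comp S C) (induced_comp S (set_inv C)). \<forall>i\<in>{1..n}. e * s i = s i)
       \<and> (\<exists>e'\<in>setmul (induced_comp S (set_inv C)) (induced_comp S C). \<forall>i\<in>{1..n}. s i * e' = s i)"
proof -
  interpret nearly_epsilon_strong_grading G S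
    using assms(3) by unfold_locales (simp_all add: nearly_epsilon_strong_def)
  have "C \<subseteq> carrier G"
    using subgroup.rcosets_carrier[OF normal_imp_subgroup[OF assms(2)] assms(1,4)] .
  then show ?thesis
    using induced_comp_common_left_unit[of C "{1..n}" g s]
      induced_comp_common_right_unit[of C "{1..n}" g s] assms(6)
    by simp
qed

end
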